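(* For all $r,s\in\mathbb{Z}_+$ there exists a constant $c(r,s)>0$ such that for every integer $n\ge 2r+1$ and every $y\in(-1,1)$ there exists an algebraic polynomial $p_{n,y}(x)$ in $x$ of degree at most $n$ satisfying, for all $x\in[-1,1]$, $$\big|\operatorname{sign}(x-y)-p_{n,y}(x)\big|\le c(r,s)\left(\frac{1-x^2}{1-x^2+1-y^2+\frac{1}{n^2}\,|\operatorname{sign}x-\operatorname{sign}y|}\right)^{r}\left(\frac{\delta_n(y)}{|x-y|+\delta_n(y)}\right)^{s},$$ where $\delta_n(y)=\frac{\sqrt{1-y^2}}{n}+\frac{1}{n^2}$.
   Context: $\operatorname{sign}t$ equals $1$ for $t>0$, $-1$ for $t<0$, and $0$ for $t=0$. $\mathbb{Z}_+=\{0,1,2,\dots\}$. *)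

theory Defs
  imports "HOL-Analysis.Analysis" "HOL-Computational_Algebra.Polynomial"
begin

definition delta_n :: "nat \<Rightarrow> real \<Rightarrow> real" where
  "delta_n n y = sqrt (1 - y^2) / real n + 1 / (real n)^2"

end

theory Submission
  imports Defs
begin

text \<open>The approximant is the normalized primitive \<open>-1 + 2 (Q x - Q (-1)) / (Q 1 - Q (-1))\<close>
  of the nonnegative polynomial kernel \<open>K u = (1 - u\<^sup>2)\<^sup>r P(u)\<^sup>k\<close>, where \<open>P (cos t)\<close> is the
  Fejer kernel of order \<open>m \<approx> n / k\<close> at \<open>t - arccos y\<close> plus its reflection at \<open>t + arccos y\<close>.
  In the variable \<open>u = cos t\<close> the Fejer bound \<open>m\<^sup>2 / (1 + m \<bar>t - arccos y\<bar>)\<^sup>2\<close> becomes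
  \<open>m\<^sup>2 \<delta> / (\<bar>u - y\<bar> + \<delta>)\<close> with \<open>\<delta> = delta_n n y\<close>, while on a window of length \<open>\<approx> \<delta>\<close> next to \<open>y\<close>
  the kernel has size \<open>\<approx> m\<^sup>2\<^sup>k (1 - y\<^sup>2 + n\<^sup>-\<^sup>2)\<^sup>r\<close>. For \<open>x < y\<close> the error is the relative mass
  of the tail \<open>[-1, x]\<close>; since \<open>(1 - u\<^sup>2) \<delta> / (\<bar>u - y\<bar> + \<delta>)\<close> is at most a multiple of
  \<open>(1 - y\<^sup>2 + n\<^sup>-\<^sup>2)\<close> times the endpoint weight at \<open>x\<close>, integrating the remaining \<open>k - r\<close> powers
  of \<open>\<delta> / (\<bar>u - y\<bar> + \<delta>)\<close> gives the bound. The case \<open>x > y\<close> follows by reflection.\<close>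

section \<open>Elementary trigonometric bounds\<close>

lemma sin_ge_x_div_pi:
  fixes x :: real assumes "0 \<le> x" "x \<le> pi/2" shows "x / pi \<le> sin x"
proof (cases "x \<le> pi/3")
  case True
  have "sin 0 - 0/2 \<le> sin x - x/2"
  proof (rule DERIV_nonneg_imp_nondecreasing[OF assms(1)])
    fix t assume t: "0 \<le> t" "t \<le> x"
    have "cos (pi/3) \<le> cos t" using t True by (subst cos_mono_le_eq) auto
    hence "0 \<le> cos t - 1/2" by (simp add: cos_60)
    moreover have "DERIV (\<lambda>x. sin x - x/2) t :> cos t - 1/2"
      by (auto intro!: derivative_eq_intros)
    ultimately show "\<exists>y. DERIV (\<lambda>x. sin x - x/2) t :> y \<and> 0 \<le> y" by blast
  qed
  hence "x/2 \<le> sin x" by simp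
  moreover have "x / pi \<le> x/2" using assms pi_ge_two by (intro divide_left_mono) auto
  ultimately show ?thesis by linarith
next
  case False
  have "sin (pi/3) \<le> sin x" using False assms by (subst sin_mono_le_eq) auto
  hence "sqrt 3 / 2 \<le> sin x" by (simp add: sin_60)
  moreover have "1 \<le> sqrt 3" by simp
  moreover have "x / pi \<le> 1/2" using assms by (simp add: field_simps)
  ultimately show ?thesis by linarith
qed

lemma sin_ge_x_div_2pi:
  fixes x :: real assumes "0 \<le> x" "x \<le> pi/2 + 1" shows "x / (2*pi) \<le> sin x"
proof (cases "x \<le> pi/2")
  case True
  have "x/(2*pi) \<le> x/pi" using assms by (intro divide_left_mono) auto
  with sin_ge_x_div_pi[OF assms(1) True] show ?thesis by linarith
next
  case False
  have p3: "3 < pi" by (rule pi_gt3)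
  have "cos (pi/3) \<le> cos 1"
    by (rule cos_monotone_0_pi_le) (use p3 in linarith)+
  also have "cos 1 \<le> cos (x - pi/2)"
    by (rule cos_monotone_0_pi_le) (use False assms p3 in linarith)+
  also have "cos (x - pi/2) = sin x" by (simp add: cos_diff)
  finally have "1/2 \<le> sin x" by (simp add: cos_60)
  moreover have "x/(2*pi) \<le> 1/2" using assms p3 by (simp add: field_simps)
  ultimately show ?thesis by linarith
qed

lemma abs_sin_half_diff_ge:
  assumes "0 \<le> t" "t \<le> pi" "0 \<le> th" "th \<le> pi"
  shows "\<bar>t - th\<bar> / (2*pi) \<le> \<bar>sin ((t - th)/2)\<bar>"
proof -
  have "\<bar>sin ((t - th)/2)\<bar> = sin (\<bar>t - th\<bar>/2)"
  proof (cases "th \<le> t")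
    case True thus ?thesis using assms by (auto simp: sin_ge_zero)
  next
    case False
    have "0 \<le> sin ((th - t)/2)" using assms False by (intro sin_ge_zero) auto
    moreover have "sin ((t - th)/2) = - sin ((th - t)/2)"
      by (metis minus_diff_eq minus_divide_left sin_minus)
    ultimately show ?thesis using False by simp
  qed
  moreover have "(\<bar>t - th\<bar>/2)/pi \<le> sin (\<bar>t - th\<bar>/2)" using assms by (intro sin_ge_x_div_pi) auto
  ultimately show ?thesis by simp
qed

lemma abs_sin_half_sum_ge:
  assumes "0 \<le> t" "t \<le> pi" "0 \<le> th" "th \<le> pi"
  shows "\<bar>t - th\<bar> / (2*pi) \<le> \<bar>sin ((t + th)/2)\<bar>"
proof -
  let ?a = "\<bar>t - th\<bar>"
  have "(?a/2)/pi \<le> sin (?a/2)" using assms by (intro sin_ge_x_div_pi) auto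
  moreover have "sin (?a/2) \<le> sin ((t + th)/2)"
  proof (cases "(t + th)/2 \<le> pi/2")
    case True
    thus ?thesis using assms by (intro sin_monotone_2pi_le) auto
  next
    case False
    have "sin (?a/2) \<le> sin (pi - (t + th)/2)"
      using assms False by (intro sin_monotone_2pi_le) (auto split: abs_split simp: field_simps)
    thus ?thesis by simp
  qed
  moreover have "0 \<le> sin ((t + th)/2)" using assms by (intro sin_ge_zero) auto
  ultimately show ?thesis by simp
qed

lemma abs_cos_diff_le:
  assumes t: "0 \<le> t" "t \<le> pi" and th: "0 \<le> th" "th \<le> pi"
  shows "\<bar>cos t - cos th\<bar> \<le> \<bar>t - th\<bar> * sin th + \<bar>t - th\<bar>^2 / 2"
proof -
  let ?a = "\<bar>t - th\<bar>"
  have s1: "\<bar>sin ((th - t)/2)\<bar> \<le> ?a/2"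
    using abs_sin_x_le_abs_x[of "(th - t)/2"] by (simp add: abs_minus_commute)
  have "(t + th)/2 = th + (t - th)/2" by (simp add: field_simps)
  hence "sin ((t + th)/2) = sin th * cos ((t - th)/2) + cos th * sin ((t - th)/2)"
    by (simp only: sin_add)
  hence "\<bar>sin ((t + th)/2)\<bar> \<le> \<bar>sin th\<bar> * \<bar>cos ((t - th)/2)\<bar> + \<bar>cos th\<bar> * \<bar>sin ((t - th)/2)\<bar>"
    by (metis abs_mult abs_triangle_ineq)
  also have "\<dots> \<le> sin th * 1 + 1 * (?a/2)"
  proof (intro add_mono mult_mono)
    show "\<bar>sin ((t - th)/2)\<bar> \<le> ?a/2" using abs_sin_x_le_abs_x[of "(t - th)/2"] by simp
  qed (use th sin_ge_zero in auto)
  finally have s2: "\<bar>sin ((t + th)/2)\<bar> \<le> sin th + ?a/2" by simp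
  have "\<bar>cos t - cos th\<bar> = 2 * \<bar>sin ((t + th)/2)\<bar> * \<bar>sin ((th - t)/2)\<bar>"
    by (simp add: cos_diff_cos abs_mult)
  also have "\<dots> \<le> 2 * (sin th + ?a/2) * (?a/2)"
    using s1 s2 sin_ge_zero[OF th] by (intro mult_mono) auto
  also have "\<dots> = ?a * sin th + ?a^2/2" by (simp add: field_simps power2_eq_square)
  finally show ?thesis .
qed

section \<open>The Fejer kernel as an algebraic polynomial\<close>

definition dirichlet_kernel :: "nat \<Rightarrow> real \<Rightarrow> real" where
  "dirichlet_kernel l v = 1 + 2 * (\<Sum>j\<in>{1..l}. cos (real j * v))"

lemma dirichlet_kernel_mult_sin: "dirichlet_kernel l v * sin (v/2) = sin ((real l + 1/2) * v)"
proof (induction l)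
  case 0 then show ?case by (simp add: dirichlet_kernel_def)
next
  case (Suc l)
  have "dirichlet_kernel (Suc l) v = dirichlet_kernel l v + 2 * cos (real (Suc l) * v)"
    by (simp add: dirichlet_kernel_def)
  hence "dirichlet_kernel (Suc l) v * sin (v/2)
      = sin ((real l + 1/2) * v) + 2 * (cos (real (Suc l) * v) * sin (v/2))"
    using Suc by (simp add: algebra_simps)
  also have "2 * (cos (real (Suc l) * v) * sin (v/2))
      = sin (real (Suc l) * v + v/2) - sin (real (Suc l) * v - v/2)"
    by (simp add: cos_times_sin)
  also have "real (Suc l) * v - v/2 = (real l + 1/2) * v" by (simp add: algebra_simps)
  also have "real (Suc l) * v + v/2 = (real (Suc l) + 1/2) * v" by (simp add: algebra_simps)
  finally show ?case by simp
qed

lemma abs_dirichlet_kernel_le: "\<bar>dirichlet_kernel l v\<bar> \<le> 1 + 2 * real l"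
proof -
  have "\<bar>\<Sum>j\<in>{1..l}. cos (real j * v)\<bar> \<le> (\<Sum>j\<in>{1..l}. \<bar>cos (real j * v)\<bar>)"
    by (rule sum_abs)
  also have "\<dots> \<le> (\<Sum>j\<in>{1..l}. 1)" by (intro sum_mono) simp
  finally have "\<bar>\<Sum>j\<in>{1..l}. cos (real j * v)\<bar> \<le> real l" by simp
  thus ?thesis unfolding dirichlet_kernel_def by linarith
qed

text \<open>This is \<open>m\<close> times the Fejer kernel of order \<open>m\<close>.\<close>

definition fejer_sum :: "nat \<Rightarrow> real \<Rightarrow> real" where
  "fejer_sum m v = (\<Sum>l<m. dirichlet_kernel l v)"

lemma fejer_sum_minus: "fejer_sum m (-v) = fejer_sum m v"
  by (simp add: fejer_sum_def dirichlet_kernel_def)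

lemma fejer_sum_mult_sin_sq: "fejer_sum m v * (sin (v/2))^2 = (sin (real m * v / 2))^2"
proof -
  have "fejer_sum m v * (sin (v/2))^2 = (\<Sum>l<m. sin ((real l + 1/2) * v) * sin (v/2))"
    by (simp add: fejer_sum_def sum_distrib_right power2_eq_square
        dirichlet_kernel_mult_sin[symmetric] mult.assoc)
  also have "\<dots> = (\<Sum>l<m. (cos (real l * v) - cos (real (Suc l) * v)) / 2)"
  proof (rule sum.cong[OF refl])
    fix l
    have "sin ((real l + 1/2) * v) * sin (v/2)
        = (cos ((real l + 1/2) * v - v/2) - cos ((real l + 1/2) * v + v/2))/2"
      by (simp add: cos_diff cos_add)
    also have "(real l + 1/2) * v - v/2 = real l * v" by (simp add: algebra_simps)
    also have "(real l + 1/2) * v + v/2 = real (Suc l) * v" by (simp add: algebra_simps)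
    finally show "sin ((real l + 1/2) * v) * sin (v/2) = (cos (real l * v) - cos (real (Suc l) * v)) / 2" .
  qed
  also have "\<dots> = (\<Sum>l<m. cos (real l * v) - cos (real (Suc l) * v)) / 2"
    by (simp add: sum_divide_distrib)
  also have "\<dots> = (1 - cos (real m * v)) / 2"
    by (subst sum_lessThan_telescope'[where f = "\<lambda>l. cos (real l * v)"]) simp
  also have "\<dots> = (sin (real m * v / 2))^2"
    using cos_double_sin[of "real m * v / 2"] by simp
  finally show ?thesis .
qed

lemma fejer_sum_eq:
  assumes "sin (v/2) \<noteq> 0" shows "fejer_sum m v = (sin (real m * v / 2))^2 / (sin (v/2))^2"
  using fejer_sum_mult_sin_sq[of m v] assms by (simp add: field_simps)

lemma abs_fejer_sum_le: "\<bar>fejer_sum m v\<bar> \<le> 2 * (real m)^2"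
proof -
  have "\<bar>fejer_sum m v\<bar> \<le> (\<Sum>l<m. \<bar>dirichlet_kernel l v\<bar>)" unfolding fejer_sum_def by (rule sum_abs)
  also have "\<dots> \<le> (\<Sum>l<m. 2 * real m)"
  proof (intro sum_mono)
    fix l assume "l \<in> {..<m}"
    hence "real l + 1 \<le> real m" by auto
    thus "\<bar>dirichlet_kernel l v\<bar> \<le> 2 * real m" using abs_dirichlet_kernel_le[of l v] by linarith
  qed
  finally show ?thesis by (simp add: power2_eq_square)
qed

lemma abs_fejer_sum_le_inverse_sin:
  assumes "sin (v/2) \<noteq> 0" shows "\<bar>fejer_sum m v\<bar> \<le> 1 / (sin (v/2))^2"
  using assms by (simp add: fejer_sum_eq field_simps abs_square_le_1)

lemma abs_fejer_sum_le_decay: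
  assumes a: "0 \<le> a" and h: "a / (2*pi) \<le> \<bar>sin (v/2)\<bar>"
  shows "\<bar>fejer_sum m v\<bar> \<le> 16 * pi^2 * (real m)^2 / (1 + real m * a)^2"
proof -
  have pos: "0 < (1 + real m * a)^2" by (intro zero_less_power add_pos_nonneg) (use a in auto)
  have pi2: "4 \<le> pi^2" using pi_ge_two power_mono[of 2 pi 2] by simp
  show ?thesis
  proof (cases "real m * a \<le> 1")
    case True
    have "(1 + real m * a)^2 \<le> 2^2" using True a by (intro power_mono) auto
    hence "2 * (real m)^2 * (1 + real m * a)^2 \<le> 2 * (real m)^2 * 4" by (intro mult_left_mono) auto
    also have "\<dots> \<le> 16 * pi^2 * (real m)^2"
      using mult_right_mono[OF pi2, of "(real m)^2"] zero_le_power2[of "real m"] by linarith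
    finally have "2 * (real m)^2 \<le> 16 * pi^2 * (real m)^2 / (1 + real m * a)^2"
      using pos by (simp add: pos_le_divide_eq)
    with abs_fejer_sum_le[of m v] show ?thesis by linarith
  next
    case False
    hence apos: "0 < a" using a by (cases "a = 0") auto
    hence sin_pos: "0 < \<bar>sin (v/2)\<bar>" using h by (smt (verit) divide_pos_pos pi_gt_zero)
    have "(a/(2*pi))^2 \<le> \<bar>sin (v/2)\<bar>^2" using h apos by (intro power_mono) auto
    hence "1 / (sin (v/2))^2 \<le> 1 / (a/(2*pi))^2"
      using apos sin_pos by (intro divide_left_mono mult_pos_pos) auto
    also have "\<dots> = 4 * pi^2 / a^2" by (simp add: power_divide power_mult_distrib)
    also have "\<dots> \<le> 16 * pi^2 * (real m)^2 / (1 + real m * a)^2"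
    proof -
      have "(1 + real m * a)^2 \<le> (2 * real m * a)^2"
        using False apos by (intro power_mono) (auto simp: mult.commute)
      hence "4 * pi^2 * (1 + real m * a)^2 \<le> 16 * pi^2 * (real m)^2 * a^2"
        by (simp add: power_mult_distrib mult_ac)
      thus ?thesis using pos apos by (simp add: field_simps)
    qed
    finally show ?thesis using abs_fejer_sum_le_inverse_sin[of v m] sin_pos by linarith
  qed
qed

lemma fejer_sum_ge:
  assumes m: "1 \<le> m" and v: "0 < \<bar>v\<bar>" "\<bar>v\<bar> \<le> pi / real m"
  shows "(real m)^2 / pi^2 \<le> fejer_sum m v"
proof -
  define b where "b = \<bar>v\<bar>/2"
  have b0: "0 < b" using v by (simp add: b_def)
  have mb: "real m * b \<le> pi/2" using v m by (simp add: b_def field_simps)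
  have "b \<le> real m * b" using m b0 by simp
  hence sb: "0 < sin b" using b0 mb by (intro sin_gt_zero) linarith+
  have "fejer_sum m v = fejer_sum m (2 * b)"
    by (cases "0 \<le> v") (auto simp: b_def fejer_sum_minus[of m v, symmetric])
  also have "\<dots> = (sin (real m * b))^2 / (sin b)^2" using sb by (simp add: fejer_sum_eq)
  finally have eq: "fejer_sum m v = (sin (real m * b))^2 / (sin b)^2" .
  have "(real m * b / pi)^2 \<le> (sin (real m * b))^2"
    using sin_ge_x_div_pi[of "real m * b"] mb b0 by (intro power_mono) auto
  moreover have "(sin b)^2 \<le> b^2" using sin_x_le_x[of b] sb b0 by (intro power_mono) auto
  ultimately have "(real m * b / pi)^2 / b^2 \<le> fejer_sum m v"
    unfolding eq using sb b0 by (metis frac_le zero_le_power2 zero_less_power)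
  moreover have "(real m * b / pi)^2 / b^2 = (real m)^2 / pi^2" using b0 by (simp add: field_simps)
  ultimately show ?thesis by simp
qed

fun chebyshev :: "nat \<Rightarrow> real poly" where
  "chebyshev 0 = 1"
| "chebyshev (Suc 0) = [:0, 1:]"
| "chebyshev (Suc (Suc n)) = [:0, 2:] * chebyshev (Suc n) - chebyshev n"

lemma poly_chebyshev_cos: "poly (chebyshev n) (cos t) = cos (real n * t)"
proof (induction n rule: chebyshev.induct)
  case (3 n)
  have "cos (real (Suc (Suc n)) * t) = cos (real (Suc n) * t + t)" by (simp add: algebra_simps)
  also have "\<dots> = 2 * cos t * cos (real (Suc n) * t) - cos (real (Suc n) * t - t)"
    by (simp add: cos_add cos_diff)
  also have "real (Suc n) * t - t = real n * t" by (simp add: algebra_simps)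
  finally show ?case using 3 by simp
qed auto

lemma degree_chebyshev: "degree (chebyshev n) \<le> n"
proof (induction n rule: chebyshev.induct)
  case (3 n)
  have "degree ([:0, 2:] * chebyshev (Suc n)) \<le> Suc (Suc n)"
    using degree_mult_le[of "[:0, 2:]" "chebyshev (Suc n)"] 3(1) by simp
  moreover have "degree (chebyshev n) \<le> Suc (Suc n)" using 3(2) by simp
  ultimately show ?case by (simp add: degree_diff_le)
qed auto

definition fejer_poly :: "nat \<Rightarrow> real \<Rightarrow> real poly" where
  "fejer_poly m th = (\<Sum>l<m. [:2:] + (\<Sum>j\<in>{1..l}. smult (4 * cos (real j * th)) (chebyshev j)))"

lemma poly_fejer_poly_cos: "poly (fejer_poly m th) (cos t) = fejer_sum m (t - th) + fejer_sum m (t + th)"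
proof -
  have "poly (fejer_poly m th) (cos t)
      = (\<Sum>l<m. 2 + (\<Sum>j\<in>{1..l}. 4 * cos (real j * th) * cos (real j * t)))"
    by (simp add: fejer_poly_def poly_sum poly_chebyshev_cos)
  also have "\<dots> = (\<Sum>l<m. dirichlet_kernel l (t - th) + dirichlet_kernel l (t + th))"
  proof (rule sum.cong[OF refl])
    fix l
    have "(\<Sum>j\<in>{1..l}. 4 * cos (real j * th) * cos (real j * t)) =
          2 * (\<Sum>j\<in>{1..l}. cos (real j * (t - th))) + 2 * (\<Sum>j\<in>{1..l}. cos (real j * (t + th)))"
      by (simp add: sum_distrib_left sum.distrib[symmetric] algebra_simps cos_add cos_diff)
    thus "2 + (\<Sum>j\<in>{1..l}. 4 * cos (real j * th) * cos (real j * t))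
        = dirichlet_kernel l (t - th) + dirichlet_kernel l (t + th)"
      by (simp add: dirichlet_kernel_def)
  qed
  finally show ?thesis by (simp add: fejer_sum_def sum.distrib)
qed

lemma degree_fejer_poly: "degree (fejer_poly m th) \<le> m - 1"
  unfolding fejer_poly_def
proof (intro degree_sum_le)
  fix l assume l: "l \<in> {..<m}"
  show "degree ([:2:] + (\<Sum>j\<in>{1..l}. smult (4 * cos (real j * th)) (chebyshev j))) \<le> m - 1"
  proof (intro degree_add_le degree_sum_le)
    fix j assume "j \<in> {1..l}"
    hence "j \<le> m - 1" using l by auto
    thus "degree (smult (4 * cos (real j * th)) (chebyshev j)) \<le> m - 1"
      using degree_chebyshev[of j] degree_smult_le[of _ "chebyshev j"] by (meson order_trans)
  qed auto
qed auto

lemma abs_poly_fejer_poly_le: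
  assumes u: "-1 \<le> u" "u \<le> 1" and y: "-1 \<le> y" "y \<le> 1"
  shows "\<bar>poly (fejer_poly m (arccos y)) u\<bar>
    \<le> 32 * pi^2 * (real m)^2 / (1 + real m * \<bar>arccos u - arccos y\<bar>)^2"
proof -
  define t where "t = arccos u"
  define th where "th = arccos y"
  have t: "0 \<le> t" "t \<le> pi" using u arccos_bounded[of u] by (auto simp: t_def)
  have th: "0 \<le> th" "th \<le> pi" using y arccos_bounded[of y] by (auto simp: th_def)
  have "\<bar>poly (fejer_poly m th) u\<bar> \<le> \<bar>fejer_sum m (t - th)\<bar> + \<bar>fejer_sum m (t + th)\<bar>"
    using poly_fejer_poly_cos[of m th t] u by (simp add: t_def)
  also have "\<dots> \<le> 2 * (16 * pi^2 * (real m)^2 / (1 + real m * \<bar>t - th\<bar>)^2)"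
    using abs_fejer_sum_le_decay[of "\<bar>t - th\<bar>" "t - th" m] abs_sin_half_diff_ge[OF t th]
      abs_fejer_sum_le_decay[of "\<bar>t - th\<bar>" "t + th" m] abs_sin_half_sum_ge[OF t th]
    by simp
  finally show ?thesis by (simp add: t_def th_def)
qed

lemma poly_fejer_poly_ge:
  assumes u: "-1 \<le> u" "u \<le> 1" and y: "-1 < y" "y < 1" and m: "1 \<le> m" and mn: "m \<le> n"
    and a: "0 < \<bar>arccos u - arccos y\<bar>" "\<bar>arccos u - arccos y\<bar> \<le> 1 / real n"
  shows "(real m)^2 / pi^2 \<le> poly (fejer_poly m (arccos y)) u"
proof -
  define t where "t = arccos u"
  define th where "th = arccos y"
  have t: "0 \<le> t" "t \<le> pi" using u arccos_bounded[of u] by (auto simp: t_def)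
  have th: "0 < th" "th < pi" using arccos_lt_bounded[OF y] by (auto simp: th_def)
  have "1 / real n \<le> 1 / real m" using m mn by (intro divide_left_mono) auto
  also have "\<dots> \<le> pi / real m" using m pi_ge_two by (intro divide_right_mono) auto
  finally have "(real m)^2 / pi^2 \<le> fejer_sum m (t - th)"
    using fejer_sum_ge[OF m, of "t - th"] a by (simp add: t_def th_def)
  moreover have "0 < sin ((t + th)/2)" using t th by (intro sin_gt_zero) auto
  hence "0 \<le> fejer_sum m (t + th)" using fejer_sum_eq[of "t + th" m] by simp
  ultimately show ?thesis using poly_fejer_poly_cos[of m th t] u by (simp add: t_def th_def)
qed

section \<open>Localization scale and endpoint weight\<close>

definition closeness :: "nat \<Rightarrow> real \<Rightarrow> real \<Rightarrow> real" where
  "closeness n y u = delta_n n y / (\<bar>u - y\<bar> + delta_n n y)"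

definition endpoint_weight :: "nat \<Rightarrow> real \<Rightarrow> real \<Rightarrow> real" where
  "endpoint_weight n y x = (1 - x^2) / (1 - x^2 + (1 - y^2) + 1 / (real n)^2 * \<bar>sgn x - sgn y\<bar>)"

lemma sin_arccos_nonneg: "-1 \<le> y \<Longrightarrow> y \<le> 1 \<Longrightarrow> 0 \<le> sin (arccos y)"
  using arccos_bounded[of y] by (auto intro: sin_ge_zero)

lemma delta_n_eq_sin_arccos:
  "-1 \<le> y \<Longrightarrow> y \<le> 1 \<Longrightarrow> delta_n n y = sin (arccos y) / real n + 1 / (real n)^2"
  by (simp add: delta_n_def sin_arccos)

lemma delta_n_pos: "-1 \<le> y \<Longrightarrow> y \<le> 1 \<Longrightarrow> 1 \<le> n \<Longrightarrow> 0 < delta_n n y"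
  by (simp add: delta_n_eq_sin_arccos add_nonneg_pos sin_arccos_nonneg)

lemma delta_n_minus: "delta_n n (-y) = delta_n n y"
  by (simp add: delta_n_def)

lemma closeness_minus: "closeness n (-y) (-u) = closeness n y u"
  by (simp add: closeness_def delta_n_minus abs_minus_commute)

lemma closeness_pos: "-1 \<le> y \<Longrightarrow> y \<le> 1 \<Longrightarrow> 1 \<le> n \<Longrightarrow> 0 < closeness n y u"
  using delta_n_pos[of y n] by (simp add: closeness_def add_nonneg_pos)

lemma closeness_le_one: "-1 \<le> y \<Longrightarrow> y \<le> 1 \<Longrightarrow> 1 \<le> n \<Longrightarrow> closeness n y u \<le> 1"
  using delta_n_pos[of y n] by (simp add: closeness_def)

text \<open>In the angular variable the Fejer kernel decays like \<open>(1 + n\<bar>t - th\<bar>)\<^sup>-\<^sup>2\<close>;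
  this converts that decay into the algebraic scale \<open>delta_n n y\<close>.\<close>

lemma closeness_ge_arccos:
  assumes u: "-1 \<le> u" "u \<le> 1" and y: "-1 \<le> y" "y \<le> 1" and n: "1 \<le> n"
  shows "1 / (1 + real n * \<bar>arccos u - arccos y\<bar>)^2 \<le> closeness n y u"
proof -
  define a where "a = \<bar>arccos u - arccos y\<bar>"
  define s where "s = sin (arccos y)"
  define d where "d = delta_n n y"
  have a0: "0 \<le> a" by (simp add: a_def)
  have s0: "0 \<le> s" using y by (simp add: s_def sin_arccos_nonneg)
  have nn: "0 < real n" using n by simp
  have dd: "d = s / real n + 1 / (real n)^2" using y by (simp add: d_def s_def delta_n_eq_sin_arccos)
  have dpos: "0 < d" using delta_n_pos[OF y n] by (simp add: d_def)
  have "\<bar>u - y\<bar> \<le> a * s + a^2/2"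
    using abs_cos_diff_le[of "arccos u" "arccos y"] u y arccos_bounded[of u] arccos_bounded[of y]
    by (simp add: a_def s_def)
  moreover have "(1 + real n * a)^2 * d = d + (2 * a * s + 2 * a / real n + real n * a^2 * s + a^2)"
    using nn by (simp add: dd field_simps power2_eq_square)
  moreover have "0 \<le> 2 * a / real n" "0 \<le> real n * a^2 * s" "0 \<le> a * s"
    using a0 s0 nn by auto
  ultimately have "\<bar>u - y\<bar> + d \<le> (1 + real n * a)^2 * d" by linarith
  moreover have "0 < (1 + real n * a)^2" by (intro zero_less_power add_pos_nonneg) (use a0 in auto)
  ultimately show ?thesis
    using dpos by (simp add: closeness_def a_def d_def field_simps)
qed

lemma one_minus_sq_le:
  fixes u y :: real
  assumes u: "-1 \<le> u" "u \<le> 1" and y: "-1 \<le> y" "y \<le> 1"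
  shows "1 - u^2 \<le> 2 * (1 - y^2) + 2 * \<bar>u - y\<bar>"
proof (cases "y \<ge> 0")
  case True
  have "1 - u^2 = (1 - u) * (1 + u)" by (simp add: algebra_simps power2_eq_square)
  also have "\<dots> \<le> (1 - u) * 2" using u by (intro mult_left_mono) auto
  also have "y * y \<le> 1 * y" using True y by (intro mult_right_mono) auto
  hence "(1 - u) * 2 \<le> 2 * (1 - y^2) + 2 * \<bar>u - y\<bar>" by (auto simp: power2_eq_square split: abs_split)
  finally show ?thesis .
next
  case False
  have "1 - u^2 = (1 - u) * (1 + u)" by (simp add: algebra_simps power2_eq_square)
  also have "\<dots> \<le> 2 * (1 + u)" using u by (intro mult_right_mono) auto
  also have "y * y \<le> (-1) * y" using False y by (intro mult_right_mono_neg) auto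
  hence "2 * (1 + u) \<le> 2 * (1 - y^2) + 2 * \<bar>u - y\<bar>" by (auto simp: power2_eq_square split: abs_split)
  finally show ?thesis .
qed

lemma one_minus_sq_mult_closeness_le:
  assumes u: "-1 \<le> u" "u \<le> 1" and y: "-1 \<le> y" "y \<le> 1" and n: "1 \<le> n"
  shows "(1 - u^2) * closeness n y u \<le> 4 * (1 - y^2 + 1 / (real n)^2)"
proof -
  define s where "s = sin (arccos y)"
  define W where "W = 1 - y^2 + 1 / (real n)^2"
  define d where "d = delta_n n y"
  have s0: "0 \<le> s" using y by (simp add: s_def sin_arccos_nonneg)
  have s2: "s^2 = 1 - y^2" using y by (simp add: s_def sin_arccos abs_square_le_1)
  have dpos: "0 < d" using delta_n_pos[OF y n] by (simp add: d_def)
  have "0 \<le> (s - 1 / real n)^2" by simp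
  hence "2 * (s / real n) \<le> s^2 + 1 / (real n)^2" by (simp add: power2_diff field_simps)
  moreover have "d = s / real n + 1 / (real n)^2"
    using y by (simp add: d_def s_def delta_n_eq_sin_arccos)
  moreover have "0 \<le> 1 - y^2" using y by (simp add: abs_square_le_1)
  moreover have "0 \<le> 1 / (real n)^2" by simp
  ultimately have dW: "d \<le> 2 * W" unfolding W_def s2 by (smt (verit))
  have "(1 - u^2) * d \<le> (2 * (1 - y^2) + 2 * \<bar>u - y\<bar>) * d"
    using one_minus_sq_le[OF u y] dpos by (intro mult_right_mono) auto
  also have "\<dots> = 2 * (1 - y^2) * d + \<bar>u - y\<bar> * (2 * d)" by (simp add: algebra_simps)
  also have "\<dots> \<le> 4 * W * d + \<bar>u - y\<bar> * (4 * W)"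
  proof (intro add_mono mult_left_mono mult_right_mono)
    show "2 * (1 - y^2) \<le> 4 * W" using \<open>0 \<le> 1 - y^2\<close> \<open>0 \<le> 1 / (real n)^2\<close>
      unfolding W_def by (smt (verit))
  qed (use dW dpos in auto)
  also have "\<dots> = 4 * W * (\<bar>u - y\<bar> + d)" by (simp add: algebra_simps)
  finally show ?thesis
    using dpos by (simp add: closeness_def W_def d_def[symmetric] field_simps)
qed

lemma endpoint_weight_minus: "endpoint_weight n (-y) (-x) = endpoint_weight n y x"
  by (simp add: endpoint_weight_def sgn_minus abs_minus_commute)

lemma endpoint_weight_denom:
  fixes n :: nat
  assumes y: "-1 < y" "y < 1" and x: "-1 \<le> x" "x \<le> 1"
  defines "D \<equiv> 1 - x^2 + (1 - y^2) + 1 / (real n)^2 * \<bar>sgn x - sgn y\<bar>"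
  shows "0 < D" and "D \<le> (1 - x^2) + 2 * (1 - y^2 + 1 / (real n)^2)"
proof -
  define q where "q = 1 / (real n)^2"
  have "y^2 < 1" using y by (simp add: abs_square_less_1)
  moreover have "x^2 \<le> 1" using x by (simp add: abs_square_le_1)
  moreover have "\<bar>sgn x - sgn y\<bar> \<le> 2" by (auto simp: sgn_real_def)
  hence "q * \<bar>sgn x - sgn y\<bar> \<le> q * 2" by (intro mult_left_mono) (auto simp: q_def)
  moreover have "0 \<le> q * \<bar>sgn x - sgn y\<bar>" by (simp add: q_def)
  ultimately show "0 < D" "D \<le> (1 - x^2) + 2 * (1 - y^2 + 1 / (real n)^2)"
    unfolding D_def q_def[symmetric] by (smt (verit))+
qed

lemma endpoint_weight_nonneg:
  assumes "-1 < y" "y < 1" "-1 \<le> x" "x \<le> 1"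
  shows "0 \<le> endpoint_weight n y x"
  using endpoint_weight_denom(1)[OF assms, of n] assms
  by (simp add: endpoint_weight_def abs_square_le_1)

lemma endpoint_weight_ge_third:
  assumes y: "-1 < y" "y < 1" and x: "-1 \<le> x" "x < y" and n: "1 \<le> n"
    and near: "0 \<le> x \<or> 1 - y^2 + 1 / (real n)^2 \<le> 1 - x^2"
  shows "1/3 \<le> endpoint_weight n y x"
proof -
  define D where "D = 1 - x^2 + (1 - y^2) + 1 / (real n)^2 * \<bar>sgn x - sgn y\<bar>"
  have D: "0 < D" "D \<le> (1 - x^2) + 2 * (1 - y^2 + 1 / (real n)^2)"
    using endpoint_weight_denom[OF y x(1), of n] x y unfolding D_def by auto
  have "D \<le> 3 * (1 - x^2)"
  proof (cases "0 \<le> x")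
    case True
    hence "x^2 < y^2" using x by (intro power_strict_mono) auto
    show ?thesis
    proof (cases "x = 0")
      case True
      have "1 / (real n)^2 \<le> 1" using n by (simp add: field_simps one_le_power)
      moreover have "D = 2 - y^2 + 1 / (real n)^2" using \<open>x < y\<close> by (simp add: D_def True)
      ultimately have "D \<le> 3" using zero_le_power2[of y] by (smt (verit))
      thus ?thesis by (simp add: True)
    next
      case False
      hence "sgn x = sgn y" using \<open>0 \<le> x\<close> x by simp
      moreover have "y^2 < 1" using y by (simp add: abs_square_less_1)
      ultimately show ?thesis using \<open>x^2 < y^2\<close> by (simp add: D_def)
    qed
  next
    case False
    thus ?thesis using near D(2) by (smt (verit))
  qed
  hence "1/3 \<le> (1 - x^2) / D" using D by (simp add: le_divide_eq)
  thus ?thesis unfolding endpoint_weight_def D_def[symmetric] .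
qed

lemma one_minus_sq_le_endpoint_weight:
  assumes y: "-1 < y" "y < 1" and x: "-1 \<le> x" "x \<le> 1"
    and far: "1 - x^2 < 1 - y^2 + 1 / (real n)^2"
  shows "1 - x^2 \<le> 3 * (1 - y^2 + 1 / (real n)^2) * endpoint_weight n y x"
proof -
  define D where "D = 1 - x^2 + (1 - y^2) + 1 / (real n)^2 * \<bar>sgn x - sgn y\<bar>"
  define W where "W = 1 - y^2 + 1 / (real n)^2"
  have D: "0 < D" "D \<le> 3 * W"
    using endpoint_weight_denom[OF y x, of n] far unfolding D_def W_def[symmetric] by linarith+
  have "0 \<le> 1 - x^2" using x by (simp add: abs_square_le_1)
  hence "(1 - x^2) * D \<le> (1 - x^2) * (3 * W)"
    using D by (intro mult_left_mono) auto
  hence "1 - x^2 \<le> (1 - x^2) * (3 * W) / D" using D by (simp add: pos_le_divide_eq)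
  thus ?thesis unfolding endpoint_weight_def D_def[symmetric] W_def[symmetric] by (simp add: mult_ac)
qed

text \<open>If \<open>x\<close> lies close to an endpoint compared
  with \<open>y\<close>, monotonicity of \<open>1 - u\<^sup>2\<close> on \<open>[-1, x]\<close> suffices; otherwise the endpoint weight
  is bounded below and the crude bound \<open>one_minus_sq_mult_closeness_le\<close> applies.\<close>

lemma one_minus_sq_mult_closeness_le_endpoint_weight:
  assumes u: "-1 \<le> u" "u \<le> x" and x: "x < y" and y: "-1 < y" "y < 1" and n: "1 \<le> n"
  shows "(1 - u^2) * closeness n y u \<le> 12 * (1 - y^2 + 1 / (real n)^2) * endpoint_weight n y x"
proof -
  define W where "W = 1 - y^2 + 1 / (real n)^2"
  have S: "0 < closeness n y u" "closeness n y u \<le> 1"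
    using closeness_pos[of y n u] closeness_le_one[of y n u] y n by auto
  have u1: "0 \<le> 1 - u^2" using u x y by (simp add: abs_square_le_1)
  have W: "0 < W" using y by (simp add: W_def abs_square_less_1 add_pos_nonneg)
  show ?thesis
  proof (cases "0 \<le> x \<or> W \<le> 1 - x^2")
    case True
    hence "1/3 \<le> endpoint_weight n y x"
      using endpoint_weight_ge_third[OF y _ x n] u unfolding W_def by auto
    hence "4 * W \<le> 12 * W * endpoint_weight n y x"
      using mult_left_mono[of "1/3" "endpoint_weight n y x" "12 * W"] W by simp
    thus ?thesis using one_minus_sq_mult_closeness_le[of u y n] u x y n by (simp add: W_def)
  next
    case False
    hence "\<bar>x\<bar> \<le> \<bar>u\<bar>" using u by auto
    hence "(1 - u^2) * closeness n y u \<le> 1 - x^2"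
      using S u1 abs_le_square_iff[of x u] mult_left_le[of "closeness n y u" "1 - u^2"] by linarith
    also have "\<dots> \<le> 3 * W * endpoint_weight n y x"
      using one_minus_sq_le_endpoint_weight[OF y, of x n] False u x unfolding W_def by auto
    also have "\<dots> \<le> 12 * W * endpoint_weight n y x"
      using endpoint_weight_nonneg[OF y, of x n] u x y W by (intro mult_right_mono) auto
    finally show ?thesis by (simp add: W_def)
  qed
qed

section \<open>A window of large kernel mass\<close>

lemma window_width:
  assumes th: "0 \<le> th" "th \<le> pi/2" and h: "0 < h" "h \<le> 1"
  shows "(sin th * h + h^2) / (8*pi^2) \<le> cos (th + h/2) - cos (th + h)"
proof -
  have "cos (th + h/2) - cos (th + h) = 2 * sin (th + 3*h/4) * sin (h/4)"
    by (simp add: cos_diff_cos field_simps)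
  moreover have "(h/4)/pi \<le> sin (h/4)" using h pi_gt3 by (intro sin_ge_x_div_pi) auto
  moreover have "(th + 3*h/4)/(2*pi) \<le> sin (th + 3*h/4)" using h th by (intro sin_ge_x_div_2pi) auto
  moreover have "0 \<le> (th + 3*h/4)/(2*pi)" "0 \<le> (h/4)/pi" using th h by auto
  ultimately have "2 * ((th + 3*h/4)/(2*pi)) * ((h/4)/pi) \<le> cos (th + h/2) - cos (th + h)"
    by (simp only:) (intro mult_mono mult_left_mono; linarith)
  moreover have "sin th * h + h^2 \<le> 2 * ((th + 3*h/4) * h)"
  proof -
    have "sin th * h \<le> th * h" using sin_x_le_x[OF th(1)] h by (intro mult_right_mono) auto
    moreover have "0 \<le> th * h" "0 \<le> h * h" using th h by auto
    moreover have "2 * ((th + 3*h/4) * h) = 2 * (th * h) + 3/2 * (h * h)" by (simp add: algebra_simps)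
    ultimately show ?thesis unfolding power2_eq_square by linarith
  qed
  hence "(sin th * h + h^2) / (8*pi^2) \<le> 2 * ((th + 3*h/4) * h) / (8*pi^2)"
    by (intro divide_right_mono) auto
  moreover have "2 * ((th + 3*h/4) * h) / (8*pi^2) = 2 * ((th + 3*h/4)/(2*pi)) * ((h/4)/pi)"
    by (simp add: field_simps power2_eq_square)
  ultimately show ?thesis by linarith
qed

lemma window_sin_sq_ge:
  assumes th: "0 \<le> th" "th \<le> pi/2" and h: "0 < h" "h \<le> 1"
    and t: "th + h/2 \<le> t" "t \<le> th + h"
  shows "((sin th)^2 + h^2) / (16*pi^2) \<le> (sin t)^2"
proof -
  have "(sin th + h/2) / (2*pi) \<le> t / (2*pi)"
    using t sin_x_le_x[OF th(1)] by (intro divide_right_mono) auto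
  also have "\<dots> \<le> sin t" using t th h by (intro sin_ge_x_div_2pi) auto
  finally have sin_t: "((sin th + h/2) / (2*pi))^2 \<le> (sin t)^2"
    using sin_ge_zero[of th] th h by (intro power_mono) auto
  have "(sin th)^2 + h^2 \<le> 4 * (sin th + h/2)^2"
    using sin_ge_zero[of th] th h by (simp add: power2_eq_square algebra_simps)
  hence "((sin th)^2 + h^2) / (16*pi^2) \<le> 4 * (sin th + h/2)^2 / (16*pi^2)"
    by (intro divide_right_mono) auto
  also have "\<dots> = ((sin th + h/2) / (2*pi))^2" by (simp add: power_divide power_mult_distrib)
  finally show ?thesis using sin_t by linarith
qed

text \<open>By \<open>poly_fejer_poly_ge\<close> the Fejer polynomial has full size \<open>m\<^sup>2\<close> on this window,
  which therefore bounds the mass of the kernel from below.\<close>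

lemma mass_window_nonneg:
  assumes y: "0 \<le> y" "y < 1" and n: "1 \<le> n"
  shows "\<exists>a b. -1 \<le> a \<and> a < b \<and> b \<le> 1 \<and> delta_n n y / (8*pi^2) \<le> b - a \<and>
     (\<forall>u\<in>{a..b}. (1 - y^2 + 1 / (real n)^2) / (16*pi^2) \<le> 1 - u^2 \<and>
        0 < \<bar>arccos u - arccos y\<bar> \<and> \<bar>arccos u - arccos y\<bar> \<le> 1 / real n)"
proof -
  define th where "th = arccos y"
  define h where "h = 1 / real n"
  have h: "0 < h" "h \<le> 1" using n by (auto simp: h_def)
  have th: "0 \<le> th" "th \<le> pi/2" using y arccos_le_pi2[of y] arccos_lbound[of y] by (auto simp: th_def)
  have "th + h \<le> pi" using th h pi_gt3 by linarith
  hence arccos_ab: "arccos (cos (th + h)) = th + h" "arccos (cos (th + h/2)) = th + h/2"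
    using th h by (auto intro!: arccos_cos)
  have delta: "delta_n n y = sin th * h + h^2"
    using y by (simp add: delta_n_eq_sin_arccos th_def h_def power2_eq_square)
  have W: "1 - y^2 + 1 / (real n)^2 = (sin th)^2 + h^2"
    using y by (simp add: th_def h_def sin_arccos abs_square_le_1 power_divide)
  have width: "delta_n n y / (8*pi^2) \<le> cos (th + h/2) - cos (th + h)"
    using window_width[OF th h] by (simp add: delta)
  moreover have "0 < delta_n n y" using delta_n_pos[of y n] y n by simp
  ultimately have "cos (th + h) < cos (th + h/2)" by (smt (verit) divide_pos_pos pi_gt_zero zero_less_power)
  moreover have "\<forall>u\<in>{cos (th + h)..cos (th + h/2)}. (1 - y^2 + 1 / (real n)^2) / (16*pi^2) \<le> 1 - u^2 \<and>
        0 < \<bar>arccos u - arccos y\<bar> \<and> \<bar>arccos u - arccos y\<bar> \<le> 1 / real n"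
  proof
    fix u assume u: "u \<in> {cos (th + h)..cos (th + h/2)}"
    hence u1: "-1 \<le> u" "u \<le> 1"
      using cos_ge_minus_one[of "th + h"] cos_le_one[of "th + h/2"] by (auto simp del: cos_ge_minus_one cos_le_one)
    have t: "th + h/2 \<le> arccos u" "arccos u \<le> th + h"
      using arccos_le_arccos[of u "cos (th + h/2)"] arccos_le_arccos[of "cos (th + h)" u] u u1
      by (auto simp: arccos_ab)
    have "(1 - y^2 + 1 / (real n)^2) / (16*pi^2) \<le> (sin (arccos u))^2"
      unfolding W using window_sin_sq_ge[OF th h t] .
    thus "(1 - y^2 + 1 / (real n)^2) / (16*pi^2) \<le> 1 - u^2 \<and>
        0 < \<bar>arccos u - arccos y\<bar> \<and> \<bar>arccos u - arccos y\<bar> \<le> 1 / real n"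
      using t h u1 by (auto simp: sin_arccos abs_square_le_1 th_def[symmetric] h_def[symmetric])
  qed
  ultimately show ?thesis using width by (intro exI[of _ "cos (th + h)"] exI[of _ "cos (th + h/2)"]) auto
qed

lemma mass_window:
  assumes y: "-1 < y" "y < 1" and n: "1 \<le> n"
  shows "\<exists>a b. -1 \<le> a \<and> a < b \<and> b \<le> 1 \<and> delta_n n y / (8*pi^2) \<le> b - a \<and>
     (\<forall>u\<in>{a..b}. (1 - y^2 + 1 / (real n)^2) / (16*pi^2) \<le> 1 - u^2 \<and>
        0 < \<bar>arccos u - arccos y\<bar> \<and> \<bar>arccos u - arccos y\<bar> \<le> 1 / real n)"
proof (cases "0 \<le> y")
  case True thus ?thesis using mass_window_nonneg[OF True y(2) n] by blast
next
  case False
  then obtain a b where ab: "-1 \<le> a" "a < b" "b \<le> 1" "delta_n n (-y) / (8*pi^2) \<le> b - a"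
    and P: "\<forall>u\<in>{a..b}. (1 - (-y)^2 + 1 / (real n)^2) / (16*pi^2) \<le> 1 - u^2 \<and>
        0 < \<bar>arccos u - arccos (-y)\<bar> \<and> \<bar>arccos u - arccos (-y)\<bar> \<le> 1 / real n"
    using mass_window_nonneg[of "-y" n] y n by auto
  have "\<bar>arccos (-u) - arccos (-y)\<bar> = \<bar>arccos u - arccos y\<bar>" if "-1 \<le> u" "u \<le> 1" for u
    using that y by (simp add: arccos_minus abs_minus_commute)
  hence "\<forall>u\<in>{-b..-a}. (1 - y^2 + 1 / (real n)^2) / (16*pi^2) \<le> 1 - u^2 \<and>
        0 < \<bar>arccos u - arccos y\<bar> \<and> \<bar>arccos u - arccos y\<bar> \<le> 1 / real n"
    using P ab by (smt (verit, del_insts) atLeastAtMost_iff power2_minus)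
  thus ?thesis using ab by (intro exI[of _ "-b"] exI[of _ "-a"]) (auto simp: delta_n_minus)
qed

section \<open>Integrating the tails\<close>

lemma DERIV_inverse_power_shift:
  fixes c d u :: real
  assumes "0 < c - u + d"
  shows "DERIV (\<lambda>u. inverse ((c - u + d)^i)) u :> real i / (c - u + d)^(Suc i)"
proof -
  have "DERIV (\<lambda>u. c - u + d) u :> -1" by (auto intro!: derivative_eq_intros)
  hence "DERIV (\<lambda>u. inverse ((c - u + d)^i)) u
      :> - (real i * (-1 * (c - u + d) ^ (i - Suc 0)) * inverse (((c - u + d)^i) ^ Suc (Suc 0)))"
    by (rule DERIV_inverse_fun[OF DERIV_power]) (use assms in simp)
  moreover have "- (real i * (-1 * z ^ (i - Suc 0)) * inverse ((z^i) ^ Suc (Suc 0))) = real i / z^(Suc i)"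
    if "0 < z" for z :: real
    using that by (cases i) (simp_all add: field_simps)
  ultimately show ?thesis using assms by simp
qed

text \<open>Integration of the tail bound: \<open>C d\<^sup>i\<^sup>+\<^sup>1 / (i (y - u + d)\<^sup>i)\<close> is a primitive of
  \<open>C (d / (y - u + d))\<^sup>i\<^sup>+\<^sup>1\<close>, so the increment of \<open>Q\<close> is dominated by its value at \<open>x\<close>.\<close>

lemma increment_le_tail_bound:
  fixes Q K :: "real \<Rightarrow> real"
  assumes ax: "a \<le> x" "x < y" and d: "0 < d" and i: "1 \<le> i" and C: "0 \<le> C"
    and der: "\<And>u. a \<le> u \<Longrightarrow> u \<le> x \<Longrightarrow> DERIV Q u :> K u"
    and K: "\<And>u. a \<le> u \<Longrightarrow> u \<le> x \<Longrightarrow> K u \<le> C * (d / (y - u + d))^(Suc i)"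
  shows "Q x - Q a \<le> C * d * (d / (y - x + d))^i"
proof -
  define Phi where "Phi u = C * d^(Suc i) / real i * inverse ((y - u + d)^i)" for u
  have "Phi a - Q a \<le> Phi x - Q x"
  proof (rule DERIV_nonneg_imp_nondecreasing[OF ax(1)])
    fix u assume u: "a \<le> u" "u \<le> x"
    have "DERIV (\<lambda>u. Phi u - Q u) u :> C * d^(Suc i) / real i * (real i / (y - u + d)^(Suc i)) - K u"
      unfolding Phi_def using ax u d
      by (intro DERIV_diff DERIV_cmult DERIV_inverse_power_shift der) auto
    moreover have "C * d^(Suc i) / real i * (real i / (y - u + d)^(Suc i)) = C * (d / (y - u + d))^(Suc i)"
      using i by (simp add: power_divide)
    ultimately show "\<exists>D. DERIV (\<lambda>u. Phi u - Q u) u :> D \<and> 0 \<le> D" using K[OF u] by force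
  qed
  moreover have "0 \<le> Phi a" using C d ax by (simp add: Phi_def)
  moreover have "Phi x = C * d * (d / (y - x + d))^i / real i"
    by (simp add: Phi_def power_divide field_simps)
  moreover have "\<dots> \<le> C * d * (d / (y - x + d))^i / 1"
    using i C d ax by (intro divide_left_mono) auto
  ultimately show ?thesis by linarith
qed

lemma sgn_error_left:
  fixes Q K :: "real \<Rightarrow> real"
  assumes y: "-1 < y" "y < 1" and n: "1 \<le> n" and k: "r + s + 2 \<le> k"
    and A: "0 < A0" "0 < A1" "0 < L"
    and der: "\<And>u. -1 \<le> u \<Longrightarrow> u \<le> 1 \<Longrightarrow> DERIV Q u :> K u"
    and K: "\<And>u. -1 \<le> u \<Longrightarrow> u \<le> 1 \<Longrightarrow> K u \<le> A0 * L * (1 - u^2)^r * closeness n y u ^ k"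
    and mass: "A1 * L * delta_n n y * (1 - y^2 + 1 / (real n)^2)^r \<le> Q 1 - Q (-1)"
    and x: "-1 \<le> x" "x < y"
  shows "2 * (Q x - Q (-1)) / (Q 1 - Q (-1))
    \<le> 2 * A0 * 12^r / A1 * endpoint_weight n y x ^ r * closeness n y x ^ s"
proof -
  define d where "d = delta_n n y"
  define W where "W = 1 - y^2 + 1 / (real n)^2"
  define R where "R = endpoint_weight n y x"
  define C where "C = A0 * L * (12 * W * R)^r"
  let ?S = "closeness n y"
  have d: "0 < d" using delta_n_pos[of y n] y n by (simp add: d_def)
  have W: "0 < W" using y by (simp add: W_def abs_square_less_1 add_pos_nonneg)
  have R: "0 \<le> R" using endpoint_weight_nonneg[OF y, of x n] x y by (simp add: R_def)
  have S: "0 < ?S u" "?S u \<le> 1" for u using closeness_pos closeness_le_one y n by auto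
  have S_left: "?S u = d / (y - u + d)" if "u \<le> x" for u using that x by (simp add: closeness_def d_def)
  have "Q x - Q (-1) \<le> C * d * (d / (y - x + d))^(k - r - 1)"
  proof (rule increment_le_tail_bound[OF x d _ _ der])
    fix u assume u: "-1 \<le> u" "u \<le> x"
    have "(1 - u^2)^r * ?S u ^ k = ((1 - u^2) * ?S u)^r * ?S u ^ (k - r)"
      using k by (simp add: power_mult_distrib power_add[symmetric])
    also have "\<dots> \<le> (12 * W * R)^r * ?S u ^ (k - r)"
      using one_minus_sq_mult_closeness_le_endpoint_weight[OF u x(2) y n] u x y S[of u]
      by (intro mult_right_mono power_mono) (auto simp: W_def R_def abs_square_le_1)
    finally have "K u \<le> A0 * L * ((12 * W * R)^r * ?S u ^ (k - r))"
      using K[of u] u x y A by (smt (verit) mult_left_mono mult.assoc zero_le_mult_iff)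
    thus "K u \<le> C * (d / (y - u + d))^Suc (k - r - 1)"
      using k S_left[OF u(2)] by (simp add: C_def Suc_diff_Suc mult.assoc)
  qed (use k A W R x y in \<open>auto simp: C_def\<close>)
  hence F: "Q x - Q (-1) \<le> C * d * ?S x ^ (k - r - 1)" using S_left[of x] by simp
  have "2 * (Q x - Q (-1)) / (Q 1 - Q (-1)) \<le> 2 * (C * d * ?S x ^ (k - r - 1)) / (A1 * L * d * W^r)"
  proof (rule frac_le)
    show "0 \<le> 2 * (C * d * ?S x ^ (k - r - 1))" using A W R d S[of x] by (simp add: C_def)
    show "0 < A1 * L * d * W^r" using A d W by simp
    show "A1 * L * d * W^r \<le> Q 1 - Q (-1)" using mass by (simp add: d_def W_def)
  qed (use F in simp)
  also have "\<dots> = 2 * A0 * 12^r / A1 * R^r * ?S x ^ (k - r - 1)"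
    using A d W by (simp add: C_def power_mult_distrib field_simps)
  also have "\<dots> \<le> 2 * A0 * 12^r / A1 * R^r * ?S x ^ s"
    using A R S[of x] k by (intro mult_left_mono power_decreasing) auto
  finally show ?thesis by (simp add: R_def)
qed

lemma sgn_error_right:
  fixes Q K :: "real \<Rightarrow> real"
  assumes y: "-1 < y" "y < 1" and n: "1 \<le> n" and k: "r + s + 2 \<le> k"
    and A: "0 < A0" "0 < A1" "0 < L"
    and der: "\<And>u. -1 \<le> u \<Longrightarrow> u \<le> 1 \<Longrightarrow> DERIV Q u :> K u"
    and K: "\<And>u. -1 \<le> u \<Longrightarrow> u \<le> 1 \<Longrightarrow> K u \<le> A0 * L * (1 - u^2)^r * closeness n y u ^ k"
    and mass: "A1 * L * delta_n n y * (1 - y^2 + 1 / (real n)^2)^r \<le> Q 1 - Q (-1)"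
    and x: "y < x" "x \<le> 1"
  shows "2 * (Q 1 - Q x) / (Q 1 - Q (-1))
    \<le> 2 * A0 * 12^r / A1 * endpoint_weight n y x ^ r * closeness n y x ^ s"
proof -
  have "DERIV (\<lambda>u. - Q (- u)) u :> K (- u)" if "-1 \<le> u" "u \<le> 1" for u
    using DERIV_minus[OF iffD1[OF DERIV_mirror der[of "-u"]]] that by simp
  moreover have "K (- u) \<le> A0 * L * (1 - u^2)^r * closeness n (-y) u ^ k" if "-1 \<le> u" "u \<le> 1" for u
    using K[of "-u"] that closeness_minus[of n y "-u"] by simp
  ultimately have "2 * (- Q x - - Q 1) / (- Q (-1) - - Q 1)
      \<le> 2 * A0 * 12^r / A1 * endpoint_weight n (-y) (-x) ^ r * closeness n (-y) (-x) ^ s"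
    using sgn_error_left[of "-y" n r s k A0 A1 L "\<lambda>u. - Q (- u)" "\<lambda>u. K (- u)" "-x"]
      y n k A mass x by (simp add: delta_n_minus)
  thus ?thesis by (simp add: endpoint_weight_minus closeness_minus)
qed

lemma nondecreasing_if_nonneg_derivative:
  fixes Q K :: "real \<Rightarrow> real"
  assumes der: "\<And>u. a \<le> u \<Longrightarrow> u \<le> b \<Longrightarrow> DERIV Q u :> K u"
    and K: "\<And>u. a \<le> u \<Longrightarrow> u \<le> b \<Longrightarrow> 0 \<le> K u"
    and ce: "a \<le> c" "c \<le> e" "e \<le> b"
  shows "Q c \<le> Q e"
proof (rule DERIV_nonneg_imp_nondecreasing[OF ce(2)])
  fix t assume "c \<le> t" "t \<le> e"
  hence "a \<le> t" "t \<le> b" using ce by linarith+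
  thus "\<exists>D. DERIV Q t :> D \<and> 0 \<le> D" using der K by blast
qed

lemma normalized_primitive_sgn_error:
  fixes Q K :: "real \<Rightarrow> real"
  assumes y: "-1 < y" "y < 1" and n: "1 \<le> n" and k: "r + s + 2 \<le> k"
    and A: "0 < A0" "0 < A1" "0 < L"
    and der: "\<And>u. -1 \<le> u \<Longrightarrow> u \<le> 1 \<Longrightarrow> DERIV Q u :> K u"
    and K_nonneg: "\<And>u. -1 \<le> u \<Longrightarrow> u \<le> 1 \<Longrightarrow> 0 \<le> K u"
    and K: "\<And>u. -1 \<le> u \<Longrightarrow> u \<le> 1 \<Longrightarrow> K u \<le> A0 * L * (1 - u^2)^r * closeness n y u ^ k"
    and mass: "A1 * L * delta_n n y * (1 - y^2 + 1 / (real n)^2)^r \<le> Q 1 - Q (-1)"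
    and x: "-1 \<le> x" "x \<le> 1"
  shows "\<bar>sgn (x - y) - (-1 + 2 * (Q x - Q (-1)) / (Q 1 - Q (-1)))\<bar>
    \<le> (2 * A0 * 12^r / A1 + 2^r) * endpoint_weight n y x ^ r * closeness n y x ^ s"
proof -
  define M where "M = Q 1 - Q (-1)"
  define T where "T = endpoint_weight n y x ^ r * closeness n y x ^ s"
  have "0 < A1 * L * delta_n n y * (1 - y^2 + 1 / (real n)^2)^r"
    using A delta_n_pos[of y n] y n by (simp add: abs_square_less_1 add_pos_nonneg)
  hence M: "0 < M" using mass by (simp add: M_def)
  have F: "0 \<le> Q x - Q (-1)" "0 \<le> Q 1 - Q x"
    using nondecreasing_if_nonneg_derivative[OF der K_nonneg] x by auto
  have "0 \<le> T" unfolding T_def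
    using endpoint_weight_nonneg[OF y x] closeness_pos[of y n x] y n by simp
  hence c: "2 * A0 * 12^r / A1 * T \<le> (2 * A0 * 12^r / A1 + 2^r) * T" by (intro mult_right_mono) auto
  consider "x < y" | "x = y" | "y < x" by linarith
  then show ?thesis
  proof cases
    case 1
    thus ?thesis using sgn_error_left[OF y n k A der K mass x(1) 1] M F c
      by (simp add: M_def T_def mult.assoc)
  next
    case 3
    have "1 - (-1 + 2 * (Q x - Q (-1)) / M) = 2 * (Q 1 - Q x) / M"
      using M by (simp add: M_def field_simps)
    thus ?thesis using sgn_error_right[OF y n k A der K mass 3 x(2)] M F c 3
      by (simp add: M_def T_def mult.assoc)
  next
    case 2
    have "0 \<le> (Q x - Q (-1)) / M" "(Q x - Q (-1)) / M \<le> 1"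
      using F M by (auto simp: M_def)
    hence "\<bar>-1 + 2 * ((Q x - Q (-1)) / M)\<bar> \<le> 1" by linarith
    hence "\<bar>sgn (x - y) - (-1 + 2 * (Q x - Q (-1)) / M)\<bar> \<le> 1" using 2 by simp
    also have "1 \<le> (2 * A0 * 12^r / A1 + 2^r) * (1/2)^r"
      using A by (simp add: distrib_right power_mult_distrib[symmetric])
    also have "endpoint_weight n y x = 1/2" "closeness n y x = 1"
      using 2 y delta_n_pos[of y n] n by (auto simp: endpoint_weight_def closeness_def power2_eq_1_iff)
    hence "(1/2 :: real) ^ r = endpoint_weight n y x ^ r * closeness n y x ^ s" by (simp only:) simp
    finally show ?thesis by (simp add: M_def)
  qed
qed

lemma abs_poly_fejer_poly_le_closeness:
  assumes u: "-1 \<le> u" "u \<le> 1" and y: "-1 \<le> y" "y \<le> 1" and n: "1 \<le> n"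
    and nB: "real n \<le> B * real m" and B: "1 \<le> B"
  shows "\<bar>poly (fejer_poly m (arccos y)) u\<bar> \<le> 32 * pi^2 * B^2 * (real m)^2 * closeness n y u"
proof -
  define a where "a = \<bar>arccos u - arccos y\<bar>"
  have a: "0 \<le> a" by (simp add: a_def)
  have "1 + real n * a \<le> B * (1 + real m * a)"
    using mult_right_mono[OF nB a] B by (simp add: algebra_simps)
  hence "(1 + real n * a)^2 \<le> (B * (1 + real m * a))^2" using a by (intro power_mono) auto
  moreover have "0 < 1 + real n * a" "0 < 1 + real m * a" using a by (simp_all add: add_pos_nonneg)
  ultimately have "B^2 / (B * (1 + real m * a))^2 \<le> B^2 / (1 + real n * a)^2"
    using B by (intro divide_left_mono mult_pos_pos) auto
  hence "1 / (1 + real m * a)^2 \<le> B^2 * (1 / (1 + real n * a)^2)"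
    using B by (simp add: power_mult_distrib)
  also have "\<dots> \<le> B^2 * closeness n y u"
    using closeness_ge_arccos[OF u y n] by (intro mult_left_mono) (auto simp: a_def)
  finally have "32 * pi^2 * (real m)^2 * (1 / (1 + real m * a)^2)
      \<le> 32 * pi^2 * (real m)^2 * (B^2 * closeness n y u)"
    by (intro mult_left_mono) auto
  with abs_poly_fejer_poly_le[OF u y, of m] show ?thesis by (simp add: a_def mult_ac)
qed

text \<open>The kernel whose normalized primitive approximates the sign function: the factor
  \<open>(1 - u\<^sup>2)\<^sup>r\<close> produces the endpoint weight, the power \<open>k\<close> of the Fejer polynomial the
  decay away from \<open>y\<close>.\<close>

definition sgn_kernel :: "nat \<Rightarrow> nat \<Rightarrow> nat \<Rightarrow> real \<Rightarrow> real poly" where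
  "sgn_kernel r k m y = [:1, 0, -1:]^r * fejer_poly m (arccos y) ^ k"

lemma poly_sgn_kernel:
  "poly (sgn_kernel r k m y) u = (1 - u^2)^r * poly (fejer_poly m (arccos y)) u ^ k"
  by (simp add: sgn_kernel_def poly_power power2_eq_square algebra_simps)

lemma degree_sgn_kernel: "degree (sgn_kernel r k m y) \<le> 2*r + k * (m - 1)"
proof -
  have "degree (sgn_kernel r k m y) \<le> degree ([:1, 0, -1:]^r :: real poly) + degree (fejer_poly m (arccos y) ^ k)"
    unfolding sgn_kernel_def by (rule degree_mult_le)
  also have "\<dots> \<le> 2*r + k * (m - 1)"
  proof (rule add_mono)
    show "degree ([:1, 0, -1:]^r :: real poly) \<le> 2*r"
      using degree_power_le[of "[:1, 0, -1:] :: real poly" r] by simp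
    show "degree (fejer_poly m (arccos y) ^ k) \<le> k * (m - 1)"
      using degree_power_le[of "fejer_poly m (arccos y)" k] degree_fejer_poly[of m "arccos y"]
      by (metis le_trans mult.commute mult_le_mono1)
  qed
  finally show ?thesis .
qed

lemma sgn_kernel_nonneg: "even k \<Longrightarrow> -1 \<le> u \<Longrightarrow> u \<le> 1 \<Longrightarrow> 0 \<le> poly (sgn_kernel r k m y) u"
  by (simp add: poly_sgn_kernel abs_square_le_1 zero_le_even_power)

lemma sgn_kernel_le:
  assumes u: "-1 \<le> u" "u \<le> 1" and y: "-1 \<le> y" "y \<le> 1" and n: "1 \<le> n" and k: "even k"
    and nB: "real n \<le> B * real m" and B: "1 \<le> B"
  shows "poly (sgn_kernel r k m y) u \<le> (32 * pi^2 * B^2)^k * ((real m)^2)^k * (1 - u^2)^r * closeness n y u ^ k"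
proof -
  have "poly (fejer_poly m (arccos y)) u ^ k = \<bar>poly (fejer_poly m (arccos y)) u\<bar> ^ k"
    using k by (simp add: power_even_abs)
  also have "\<dots> \<le> (32 * pi^2 * B^2 * (real m)^2 * closeness n y u) ^ k"
    using abs_poly_fejer_poly_le_closeness[OF u y n nB B] by (intro power_mono) auto
  finally have "(1 - u^2)^r * poly (fejer_poly m (arccos y)) u ^ k
      \<le> (1 - u^2)^r * (32 * pi^2 * B^2 * (real m)^2 * closeness n y u) ^ k"
    using u by (intro mult_left_mono) (auto simp: abs_square_le_1)
  thus ?thesis by (simp add: poly_sgn_kernel power_mult_distrib mult_ac)
qed

lemma sgn_kernel_mass:
  assumes y: "-1 < y" "y < 1" and m: "1 \<le> m" "m \<le> n" and k: "even k"
    and der: "\<And>u. DERIV Q u :> poly (sgn_kernel r k m y) u"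
  shows "1 / (8 * pi^2 * (16 * pi^2)^r * (pi^2)^k) * ((real m)^2)^k * delta_n n y
    * (1 - y^2 + 1 / (real n)^2)^r \<le> Q 1 - Q (-1)"
proof -
  define W where "W = 1 - y^2 + 1 / (real n)^2"
  let ?K = "\<lambda>u. poly (sgn_kernel r k m y) u"
  have W: "0 < W" using y by (simp add: W_def abs_square_less_1 add_pos_nonneg)
  have "1 \<le> n" using m by simp
  then obtain a b where ab: "-1 \<le> a" "a < b" "b \<le> 1" "delta_n n y / (8*pi^2) \<le> b - a"
    and win: "\<forall>u\<in>{a..b}. W / (16*pi^2) \<le> 1 - u^2 \<and>
      0 < \<bar>arccos u - arccos y\<bar> \<and> \<bar>arccos u - arccos y\<bar> \<le> 1 / real n"
    using mass_window[OF y] unfolding W_def by blast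
  obtain z where z: "a < z" "z < b" "Q b - Q a = (b - a) * ?K z"
    using MVT2[OF ab(2), of Q ?K] der by blast
  have wz: "W / (16*pi^2) \<le> 1 - z^2" "0 < \<bar>arccos z - arccos y\<bar>" "\<bar>arccos z - arccos y\<bar> \<le> 1 / real n"
    using win z by auto
  have "(W / (16*pi^2))^r \<le> (1 - z^2)^r" using wz W by (intro power_mono) auto
  moreover have "((real m)^2 / pi^2)^k \<le> poly (fejer_poly m (arccos y)) z ^ k"
    using poly_fejer_poly_ge[of z y m n] wz z ab y m by (intro power_mono) auto
  ultimately have "(W / (16*pi^2))^r * ((real m)^2 / pi^2)^k \<le> ?K z"
    unfolding poly_sgn_kernel using W z ab by (intro mult_mono) (auto simp: abs_square_le_1)
  hence "(delta_n n y / (8*pi^2)) * ((W / (16*pi^2))^r * ((real m)^2 / pi^2)^k) \<le> Q b - Q a"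
    using ab(4) z delta_n_pos[of y n] y m W by (simp only: z(3)) (intro mult_mono; simp)
  also have "\<dots> \<le> Q 1 - Q (-1)"
    using nondecreasing_if_nonneg_derivative[OF der sgn_kernel_nonneg[OF k], of "-1" 1 "-1" a]
      nondecreasing_if_nonneg_derivative[OF der sgn_kernel_nonneg[OF k], of "-1" 1 b 1] ab by simp
  finally show ?thesis
    by (simp add: W_def power_divide power_mult_distrib mult_ac)
qed

lemma exists_poly_antiderivative:
  fixes p :: "real poly"
  obtains Q where "pderiv Q = p" "degree Q \<le> degree p + 1"
proof
  define Q where "Q = (\<Sum>i\<le>degree p. monom (coeff p i / real (Suc i)) (Suc i))"
  have "pderiv Q = (\<Sum>i\<le>degree p. monom (coeff p i) i)"
    using higher_pderiv_sum[of 1 "\<lambda>i. monom (coeff p i / real (Suc i)) (Suc i)" "{..degree p}"]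
    by (simp add: Q_def pderiv_monom)
  thus "pderiv Q = p" by (simp add: poly_as_sum_of_monoms)
  show "degree Q \<le> degree p + 1"
    unfolding Q_def by (intro degree_sum_le) (auto intro: order_trans[OF degree_monom_le])
qed

lemma exists_normalized_primitive:
  fixes K :: "real poly"
  obtains Q p where "\<And>u. DERIV (poly Q) u :> poly K u" "degree p \<le> degree K + 1"
    "\<And>x. poly p x = -1 + 2 * (poly Q x - poly Q (-1)) / (poly Q 1 - poly Q (-1))"
proof -
  obtain Q where Q: "pderiv Q = K" "degree Q \<le> degree K + 1"
    using exists_poly_antiderivative by blast
  define M where "M = poly Q 1 - poly Q (-1)"
  define p where "p = [: -1 - 2 * poly Q (-1) / M :] + smult (2 / M) Q"
  show ?thesis
  proof
    show "DERIV (poly Q) u :> poly K u" for u using poly_DERIV[of Q u] Q(1) by simp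
    show "degree p \<le> degree K + 1"
      using Q(2) unfolding p_def by (intro degree_add_le) (auto intro: order_trans[OF degree_smult_le])
    show "poly p x = -1 + 2 * (poly Q x - poly Q (-1)) / (poly Q 1 - poly Q (-1))" for x
      by (simp add: p_def M_def field_simps diff_divide_distrib add_divide_distrib)
  qed
qed

lemma fejer_order_bounds:
  fixes n r k :: nat
  assumes n: "2*r + 1 \<le> n" and k: "1 \<le> k"
  defines "m \<equiv> (n - 1 - 2*r) div k + 1"
  shows "1 \<le> m" "m \<le> n" "2*r + k * (m - 1) \<le> n - 1" "real n \<le> real (k + 2*r + 1) * real m"
proof -
  define q where "q = n - 1 - 2*r"
  have mq: "m = q div k + 1" by (simp add: m_def q_def)
  have n_q: "n = q + 2*r + 1" using n by (simp add: q_def)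
  show "1 \<le> m" by (simp add: mq)
  show "m \<le> n" using div_le_dividend[of q k] unfolding mq n_q by linarith
  show "2*r + k * (m - 1) \<le> n - 1" using div_times_less_eq_dividend[of q k] by (simp add: mq n_q)
  have "q mod k < k" using k by simp
  moreover have "q = k * (q div k) + q mod k" by simp
  moreover have "k * m = k * (q div k) + k" by (simp add: mq)
  moreover have "2*r \<le> 2*r*m" using \<open>1 \<le> m\<close> by simp
  ultimately have "n \<le> k * m + 2*r*m + m" using n_q \<open>1 \<le> m\<close> by linarith
  thus "real n \<le> real (k + 2*r + 1) * real m" by (simp add: algebra_simps flip: of_nat_mult of_nat_le_iff)
qed

definition sgn_approx_const :: "nat \<Rightarrow> nat \<Rightarrow> real" where
  "sgn_approx_const r s = (let k = 2 * (r + s + 2); B = real (k + 2*r + 1) in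
     2 * (32 * pi^2 * B^2)^k * 12^r * (8 * pi^2 * (16 * pi^2)^r * (pi^2)^k) + 2^r)"

lemma sgn_approx_const_pos: "0 < sgn_approx_const r s"
  by (simp add: sgn_approx_const_def Let_def add_pos_nonneg)

lemma sgn_approx_poly:
  assumes n: "2*r + 1 \<le> n" and y: "-1 < y" "y < 1"
  obtains p :: "real poly" where "degree p \<le> n"
    "\<And>x. -1 \<le> x \<Longrightarrow> x \<le> 1 \<Longrightarrow> \<bar>sgn (x - y) - poly p x\<bar>
       \<le> sgn_approx_const r s * endpoint_weight n y x ^ r * closeness n y x ^ s"
proof -
  \<comment> \<open>\<open>k\<close> is even to make the kernel nonnegative and exceeds \<open>r + s + 1\<close> to make its tails integrable.\<close>
  define k where "k = 2 * (r + s + 2)"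
  define B where "B = real (k + 2*r + 1)"
  define m where "m = (n - 1 - 2*r) div k + 1"
  define A0 where "A0 = (32 * pi^2 * B^2)^k"
  define A1 where "A1 = 1 / (8 * pi^2 * (16 * pi^2)^r * (pi^2)^k)"
  define L where "L = ((real m)^2)^k"
  have k: "r + s + 2 \<le> k" "even k" "1 \<le> k" by (auto simp: k_def)
  have m: "1 \<le> m" "m \<le> n" "2*r + k * (m - 1) \<le> n - 1" "real n \<le> B * real m"
    using fejer_order_bounds[OF n k(3)] by (simp_all add: m_def B_def)
  have n1: "1 \<le> n" and B: "1 \<le> B" using n by (simp_all add: B_def)
  have A: "0 < A0" "0 < A1" "0 < L" using B m by (simp_all add: A0_def A1_def L_def)
  obtain Q p where der: "\<And>u. DERIV (poly Q) u :> poly (sgn_kernel r k m y) u"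
    and deg: "degree p \<le> degree (sgn_kernel r k m y) + 1"
    and p: "\<And>x. poly p x = -1 + 2 * (poly Q x - poly Q (-1)) / (poly Q 1 - poly Q (-1))"
    using exists_normalized_primitive by blast
  show ?thesis
  proof
    show "degree p \<le> n" using degree_sgn_kernel[of r k m y] deg m(3) n by linarith
    fix x :: real assume x: "-1 \<le> x" "x \<le> 1"
    have "\<bar>sgn (x - y) - poly p x\<bar>
        \<le> (2 * A0 * 12^r / A1 + 2^r) * endpoint_weight n y x ^ r * closeness n y x ^ s"
      unfolding p
    proof (rule normalized_primitive_sgn_error[OF y n1 k(1) A der _ _ _ x])
      fix u :: real assume u: "-1 \<le> u" "u \<le> 1"
      show "0 \<le> poly (sgn_kernel r k m y) u" using sgn_kernel_nonneg[OF k(2) u] .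
      show "poly (sgn_kernel r k m y) u \<le> A0 * L * (1 - u^2)^r * closeness n y u ^ k"
        using sgn_kernel_le[OF u _ _ n1 k(2) m(4) B] y by (simp add: A0_def L_def)
    next
      show "A1 * L * delta_n n y * (1 - y^2 + 1 / (real n)^2)^r \<le> poly Q 1 - poly Q (-1)"
        using sgn_kernel_mass[OF y m(1,2) k(2) der] by (simp add: A1_def L_def)
    qed
    moreover have "2 * A0 * 12^r / A1 + 2^r = sgn_approx_const r s"
      by (simp add: sgn_approx_const_def A0_def A1_def k_def B_def Let_def)
    ultimately show "\<bar>sgn (x - y) - poly p x\<bar>
        \<le> sgn_approx_const r s * endpoint_weight n y x ^ r * closeness n y x ^ s" by simp
  qed
qed

theorem mainTheorem4:
  fixes r s :: nat
  shows "\<exists>c::real. c > 0 \<and>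
    (\<forall>n::nat. n \<ge> 2*r+1 \<longrightarrow>
      (\<forall>y::real. -1 < y \<and> y < 1 \<longrightarrow>
        (\<exists>p :: real poly. degree p \<le> n \<and>
          (\<forall>x::real. -1 \<le> x \<and> x \<le> 1 \<longrightarrow>
            \<bar>sgn (x - y) - poly p x\<bar> \<le>
              c * ((1 - x^2) / (1 - x^2 + (1 - y^2) + (1 / (real n)^2) * \<bar>sgn x - sgn y\<bar>)) ^ r
                * (delta_n n y / (\<bar>x - y\<bar> + delta_n n y)) ^ s))))"
proof (intro exI[of _ "sgn_approx_const r s"] conjI allI impI)
  show "0 < sgn_approx_const r s" by (rule sgn_approx_const_pos)
  fix n :: nat and y :: real
  assume "2*r + 1 \<le> n" and "-1 < y \<and> y < 1"
  then obtain p :: "real poly" where "degree p \<le> n"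
    "\<And>x. -1 \<le> x \<Longrightarrow> x \<le> 1 \<Longrightarrow> \<bar>sgn (x - y) - poly p x\<bar>
       \<le> sgn_approx_const r s * endpoint_weight n y x ^ r * closeness n y x ^ s"
    using sgn_approx_poly[of r n y s] by blast
  thus "\<exists>p :: real poly. degree p \<le> n \<and> (\<forall>x. -1 \<le> x \<and> x \<le> 1 \<longrightarrow>
      \<bar>sgn (x - y) - poly p x\<bar> \<le> sgn_approx_const r s
        * ((1 - x^2) / (1 - x^2 + (1 - y^2) + (1 / (real n)^2) * \<bar>sgn x - sgn y\<bar>)) ^ r
        * (delta_n n y / (\<bar>x - y\<bar> + delta_n n y)) ^ s)"
    unfolding endpoint_weight_def closeness_def by blast
qed

end
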